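(* Let $q,m$ be positive integers with $q\ge 2$. Let $\mathbf{B}^{q,m}=[b_{j,k}]$ be the $(q-1)q^m\times q(m+1)$ array with rows indexed by $j\in[0,(q-1)q^m)$ and columns by $k\in[0,q(m+1))$, defined as follows. Write $j=(j_m,j_{m-1},\dots,j_0)_q$ (so $j_m\in[0,q-1)$) and $k=uq+v$ with $0\le u\le m$, $0\le v<q$. If $0\le u<m$: $$b_{j,k}=\begin{cases} (j_{m-1},\dots,j_{u+1},\ j_u+j_m+1,\ j_{u-1},\dots,j_0)_q, & j_u=v,\\ *, & j_u\ne v.\end{cases}$$ If $u=m$: $$b_{j,k}=\begin{cases} (j_{m-1},\dots,j_0)_q, & j_0+\cdots+j_{m-1}+j_m=v-1,\\ *, & j_0+\cdots+j_{m-1}+j_m\ne v-1,\end{cases}$$ where all additions and subtractions of digits (including in the conditions) are performed modulo $q$ (with results in $[0,q)$). Then $\mathbf{B}^{q,m}$ is a $(q-1)(m+1)$-regular $(q(m+1),\,(q-1)q^m,\,(q-1)^2q^{m-1},\,q^m)$ PDA, and its rate $S/F$ equals $1/(q-1)$.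
   Context: Notation: $[i,j)=\{i,\dots,j-1\}$. For an integer $s$ with $s=\sum_{l=0}^{n-1}s_lq^l$, $s_l\in[0,q)$, we write $s=(s_{n-1},\dots,s_0)_q$ (the $q$-ary representation; the leftmost digit is most significant). For positive integers $K,F,Z,S$ and an integer $g$, an $F\times K$ array $\mathbf{P}=[p_{j,k}]$ whose entries are either a special symbol $*$ or one of the integers $0,1,\dots,S-1$ is a $g$-regular $(K,F,Z,S)$ PDA if: (C1) the symbol $*$ appears exactly $Z$ times in each column; (C2') each integer in $[0,S)$ appears exactly $g$ times in $\mathbf{P}$; (C3) for any two distinct entries with $p_{j_1,k_1}=p_{j_2,k_2}=s$ an integer, we have $j_1\neq j_2$, $k_1\neq k_2$, and $p_{j_1,k_2}=p_{j_2,k_1}=*$. The rate of such a PDA (i.e. of its associated caching scheme) is $R=S/F$. *)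

theory Defs
  imports Complex_Main
begin

text \<open>An F x K array with entries either * (None) or an integer (Some s).
  Rows are indexed by j < F, columns by k < K.\<close>

definition is_PDA :: "nat \<Rightarrow> nat \<Rightarrow> nat \<Rightarrow> nat \<Rightarrow> (nat \<Rightarrow> nat \<Rightarrow> nat option) \<Rightarrow> bool" where
  "is_PDA K F Z S P \<longleftrightarrow>
     (\<forall>j<F. \<forall>k<K. \<forall>s. P j k = Some s \<longrightarrow> s < S) \<and>
     (\<forall>k<K. card {j. j < F \<and> P j k = None} = Z) \<and>
     (\<forall>j1<F. \<forall>k1<K. \<forall>j2<F. \<forall>k2<K. \<forall>s.
        (j1, k1) \<noteq> (j2, k2) \<and> P j1 k1 = Some s \<and> P j2 k2 = Some s \<longrightarrow>
        j1 \<noteq> j2 \<and> k1 \<noteq> k2 \<and> P j1 k2 = None \<and> P j2 k1 = None)"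

definition is_regular_PDA :: "nat \<Rightarrow> nat \<Rightarrow> nat \<Rightarrow> nat \<Rightarrow> nat \<Rightarrow> (nat \<Rightarrow> nat \<Rightarrow> nat option) \<Rightarrow> bool" where
  "is_regular_PDA g K F Z S P \<longleftrightarrow> is_PDA K F Z S P \<and>
     (\<forall>s<S. card {(j, k). j < F \<and> k < K \<and> P j k = Some s} = g)"

definition PDA_rate :: "nat \<Rightarrow> nat \<Rightarrow> real" where
  "PDA_rate S F = real S / real F"

definition digit :: "nat \<Rightarrow> nat \<Rightarrow> nat \<Rightarrow> nat" where
  "digit q n l = n div q ^ l mod q"

definition B_arr :: "nat \<Rightarrow> nat \<Rightarrow> nat \<Rightarrow> nat \<Rightarrow> nat option" where
  "B_arr q m j k =
     (let u = k div q; v = k mod q in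
      if u < m then
        (if digit q j u = v then
           Some (\<Sum>l<m. (if l = u then (digit q j u + digit q j m + 1) mod q
                          else digit q j l) * q ^ l)
         else None)
      else
        (if int ((\<Sum>l\<le>m. digit q j l) mod q) = (int v - 1) mod int q
         then Some (\<Sum>l<m. digit q j l * q ^ l)
         else None))"

end

theory Submission
  imports Defs "HOL-Number_Theory.Cong"
begin

text \<open>Write a row \<open>j\<close> as its lower digits \<open>x = (j\<^sub>0, \<dots>, j\<^sub>m\<^sub>-\<^sub>1)\<close> and its top digit
  \<open>a = j\<^sub>m < q - 1\<close>. In column block \<open>u\<close> the row is filled in exactly one column \<open>u q + v\<close>,
  namely \<open>v = x\<^sub>u\<close> for \<open>u < m\<close> and \<open>v = x\<^sub>0 + \<dots> + x\<^sub>m\<^sub>-\<^sub>1 + a + 1 mod q\<close> for \<open>u = m\<close>, with the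
  entry \<open>x\<close> with digit \<open>u\<close> raised by \<open>a + 1\<close>. Cyclically shifting a lower digit shifts these
  offsets, so each column has \<open>F/q\<close> filled cells. A value together with the block \<open>u\<close> and the
  top digit \<open>a\<close> determines its cell, and every pair \<open>(u, a)\<close> occurs, which gives
  \<open>g = (m + 1)(q - 1)\<close>. Finally, if a value occurred at \<open>(j\<^sub>1, k\<^sub>1)\<close> and \<open>(j\<^sub>2, k\<^sub>2)\<close> with row
  \<open>j\<^sub>1\<close> filled in column \<open>k\<^sub>2\<close>, the relevant digit (or digit sum) of the value would differ
  from itself by \<open>a\<^sub>2 + 1 \<noteq> 0\<close> modulo \<open>q\<close>.\<close>

definition from_digits :: "nat \<Rightarrow> nat \<Rightarrow> (nat \<Rightarrow> nat) \<Rightarrow> nat" where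
  "from_digits q m x = (\<Sum>l<m. x l * q ^ l)"

lemma digit_less: "0 < q \<Longrightarrow> digit q n l < q"
  by (simp add: digit_def)

lemma from_digits_cong: "(\<And>l. l < m \<Longrightarrow> x l = y l) \<Longrightarrow> from_digits q m x = from_digits q m y"
  unfolding from_digits_def by (rule sum.cong) auto

lemma from_digits_Suc: "from_digits q (Suc m) x = from_digits q m x + x m * q ^ m"
  by (simp add: from_digits_def)

lemma from_digits_less:
  assumes "\<And>l. l < m \<Longrightarrow> x l < q"
  shows "from_digits q m x < q ^ m"
  using assms
proof (induction m)
  case 0
  then show ?case by (simp add: from_digits_def)
next
  case (Suc m)
  have "from_digits q (Suc m) x < q ^ m + x m * q ^ m"
    using Suc by (simp add: from_digits_Suc)
  also have "\<dots> \<le> q * q ^ m"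
    using Suc.prems[of m] mult_le_mono1[of "x m + 1" q "q ^ m"] by simp
  finally show ?case by simp
qed

lemma from_digits_digit: "0 < q \<Longrightarrow> from_digits q m (digit q n) = n mod q ^ m"
proof (induction m)
  case 0
  then show ?case by (simp add: from_digits_def)
next
  case (Suc m)
  have "n mod q ^ Suc m = q ^ m * (n div q ^ m mod q) + n mod q ^ m"
    by (metis mod_mult2_eq mult.commute power_Suc2)
  then show ?case
    using Suc by (simp add: from_digits_Suc digit_def)
qed

lemma
  assumes "0 < q" and "y < q ^ m"
  shows digit_add_mult_power_low: "l < m \<Longrightarrow> digit q (y + a * q ^ m) l = digit q y l"
    and div_add_mult_power: "(y + a * q ^ m) div q ^ m = a"
proof -
  assume "l < m"
  then have "q ^ m = q ^ l * q * q ^ (m - Suc l)"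
    by (metis Suc_leI le_add_diff_inverse power_Suc2 power_add)
  then have expand: "y + a * q ^ m = y + (a * q ^ (m - Suc l) * q) * q ^ l"
    by (simp add: ac_simps)
  have "digit q (y + a * q ^ m) l = (y div q ^ l + a * q ^ (m - Suc l) * q) mod q"
    unfolding digit_def expand using assms(1) by simp
  then show "digit q (y + a * q ^ m) l = digit q y l"
    by (simp add: digit_def)
next
  show "(y + a * q ^ m) div q ^ m = a"
    using assms by simp
qed

lemma digit_from_digits:
  assumes "0 < q" and "\<And>l. l < m \<Longrightarrow> x l < q" and "l < m"
  shows "digit q (from_digits q m x) l = x l"
  using assms(2,3)
proof (induction m)
  case 0
  then show ?case by simp
next
  case (Suc m)
  have small: "from_digits q m x < q ^ m"
    using Suc.prems(1) by (intro from_digits_less) simp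
  show ?case
  proof (cases "l < m")
    case True
    then show ?thesis
      using Suc digit_add_mult_power_low[OF assms(1) small] by (simp add: from_digits_Suc)
  next
    case False
    then have "l = m" using Suc.prems(2) by simp
    then show ?thesis
      using Suc.prems(1)[of m] div_add_mult_power[OF assms(1) small]
      by (simp add: from_digits_Suc digit_def)
  qed
qed

lemma not_cong_add_self:
  fixes x b :: nat
  assumes "0 < b" and "b < q"
  shows "\<not> [x + b = x] (mod q)"
proof
  assume "[x + b = x] (mod q)"
  then have "[x + b = x + 0] (mod q)"
    by simp
  then have "[b = 0] (mod q)"
    by (simp only: cong_add_lcancel_nat)
  then have "b = 0"
    by (rule cong_less_modulus_unique_nat[OF _ assms(2)]) (use assms in simp)
  then show False
    using assms(1) by simp
qed

lemma cong_add_right_cancel_less: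
  fixes a b c :: nat
  assumes "a < q" and "b < q" and "[a + c = b + c] (mod q)"
  shows "a = b"
  using assms cong_add_rcancel_nat cong_less_modulus_unique_nat by blast

lemma sum_fun_upd_add:
  fixes f :: "'a \<Rightarrow> 'b::comm_monoid_add"
  assumes "finite A" and "u \<in> A"
  shows "sum (f(u := w)) A + f u = sum f A + w"
proof -
  have "sum (f(u := w)) (A - {u}) = sum f (A - {u})"
    by (rule sum.cong) auto
  then show ?thesis
    using sum.remove[OF assms, of f] sum.remove[OF assms, of "f(u := w)"]
    by (simp add: ac_simps)
qed

lemma card_fibres_eq_if_cyclic_shifts:
  fixes c :: "'a \<Rightarrow> nat" and \<sigma> :: "nat \<Rightarrow> 'a \<Rightarrow> 'a"
  assumes fin: "finite A" and c_less: "\<And>x. x \<in> A \<Longrightarrow> c x < q"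
    and inj: "\<And>t. inj_on (\<sigma> t) A" and into: "\<And>t x. x \<in> A \<Longrightarrow> \<sigma> t x \<in> A"
    and shift: "\<And>t x. x \<in> A \<Longrightarrow> c (\<sigma> t x) = (c x + t) mod q"
    and v: "v < q"
  shows "q * card {x \<in> A. c x = v} = card A"
proof -
  let ?fib = "\<lambda>v. {x \<in> A. c x = v}"
  have le: "card (?fib v) \<le> card (?fib w)" if "v < q" "w < q" for v w
  proof (rule card_inj_on_le)
    show "inj_on (\<sigma> (w + q - v)) (?fib v)"
      using inj by (rule inj_on_subset) auto
    have "(v + (w + q - v)) mod q = w"
      using that by simp
    then show "\<sigma> (w + q - v) ` ?fib v \<subseteq> ?fib w"
      using into shift by auto
  qed (use fin in simp)
  have "card A = card (\<Union>w\<in>{..<q}. ?fib w)"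
    using c_less by (intro arg_cong[where f = card]) auto
  also have "\<dots> = (\<Sum>w<q. card (?fib w))"
    using fin by (intro card_UN_disjoint) auto
  also have "\<dots> = (\<Sum>w<q. card (?fib v))"
    using le v by (intro sum.cong refl antisym) auto
  finally show ?thesis by simp
qed

locale B_array =
  fixes q m :: nat
  assumes q_ge_2: "q \<ge> 2" and m_ge_1: "m \<ge> 1"
begin

lemma q_pos: "0 < q"
  using q_ge_2 by simp

definition row :: "(nat \<Rightarrow> nat) \<Rightarrow> nat \<Rightarrow> nat" where
  "row x a = from_digits q m x + a * q ^ m"

definition key :: "nat \<Rightarrow> nat \<Rightarrow> nat" where
  "key j u = (if u < m then digit q j u else ((\<Sum>l\<le>m. digit q j l) + 1) mod q)"

text \<open>For the last block \<open>u = m\<close> the update touches digit \<open>m\<close>, which \<open>from_digits q m\<close>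
  ignores, so the entry is just the lower part of the row.\<close>
definition entry :: "nat \<Rightarrow> nat \<Rightarrow> nat" where
  "entry j u = from_digits q m ((digit q j)(u := (digit q j u + digit q j m + 1) mod q))"

lemma B_arr_column:
  assumes "u \<le> m" and "v < q"
  shows "B_arr q m j (u * q + v) = (if key j u = v then Some (entry j u) else None)"
proof -
  have col: "(u * q + v) div q = u" "(u * q + v) mod q = v"
    using assms q_pos by auto
  show ?thesis
  proof (cases "u < m")
    case True
    then show ?thesis
      unfolding B_arr_def Let_def col key_def entry_def from_digits_def by (auto intro!: sum.cong)
  next
    case False
    have "int (n mod q) = (int v - 1) mod int q \<longleftrightarrow> (n + 1) mod q = v" for n
    proof -
      have "int (n mod q) = (int v - 1) mod int q \<longleftrightarrow> [int n = int v - 1] (mod int q)"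
        by (simp add: cong_def zmod_int)
      also have "\<dots> \<longleftrightarrow> [n + 1 = v] (mod q)"
        by (simp add: cong_int_iff[symmetric] cong_iff_lin diff_eq_eq ac_simps)
      also have "\<dots> \<longleftrightarrow> (n + 1) mod q = v"
        using assms(2) by (simp add: cong_def)
      finally show ?thesis .
    qed
    moreover have "from_digits q m ((digit q j)(u := w)) = from_digits q m (digit q j)" for w
      using False by (intro from_digits_cong) auto
    ultimately show ?thesis
      using False assms(1)
      unfolding B_arr_def Let_def col key_def entry_def by (simp add: from_digits_def)
  qed
qed

lemma row_less:
  assumes "\<And>l. l < m \<Longrightarrow> x l < q" and "a < q - 1"
  shows "row x a < (q - 1) * q ^ m"
proof -
  have "row x a < q ^ m + a * q ^ m"
    unfolding row_def using from_digits_less assms(1) by simp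
  also have "\<dots> \<le> (q - 1) * q ^ m"
    using assms(2) mult_le_mono1[of "a + 1" "q - 1" "q ^ m"] by simp
  finally show ?thesis .
qed

lemma digit_row:
  assumes "\<And>l. l < m \<Longrightarrow> x l < q" and "l < m"
  shows "digit q (row x a) l = x l"
  unfolding row_def
  using digit_add_mult_power_low[OF q_pos from_digits_less] digit_from_digits[OF q_pos] assms
  by simp

lemma digit_row_top:
  assumes "\<And>l. l < m \<Longrightarrow> x l < q" and "a < q"
  shows "digit q (row x a) m = a"
  unfolding row_def digit_def using div_add_mult_power[OF q_pos from_digits_less] assms by simp

lemma digit_top:
  assumes "j < (q - 1) * q ^ m"
  shows "digit q j m = j div q ^ m"
proof -
  have "j div q ^ m < q - 1"
    using assms by (simp add: less_mult_imp_div_less)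
  then show ?thesis
    by (simp add: digit_def)
qed

lemma top_less: "j < (q - 1) * q ^ m \<Longrightarrow> digit q j m < q - 1"
  by (simp add: digit_top less_mult_imp_div_less)

lemma row_digits: "j < (q - 1) * q ^ m \<Longrightarrow> row (digit q j) (digit q j m) = j"
  unfolding row_def from_digits_digit[OF q_pos] by (simp add: digit_top mod_div_mult_eq)

lemma row_eqI:
  assumes "j1 < (q - 1) * q ^ m" and "j2 < (q - 1) * q ^ m"
    and "\<And>l. l \<le> m \<Longrightarrow> digit q j1 l = digit q j2 l"
  shows "j1 = j2"
proof -
  have "from_digits q m (digit q j1) = from_digits q m (digit q j2)"
    using assms(3) by (intro from_digits_cong) simp
  then show ?thesis
    using row_digits[OF assms(1)] row_digits[OF assms(2)] assms(3)[of m] by (simp add: row_def)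
qed

lemma digit_entry:
  "l < m \<Longrightarrow> digit q (entry j u) l = ((digit q j)(u := (digit q j u + digit q j m + 1) mod q)) l"
  unfolding entry_def using q_pos digit_less by (intro digit_from_digits) auto

lemma entry_less: "entry j u < q ^ m"
  unfolding entry_def using q_pos digit_less by (intro from_digits_less) auto

lemma key_less: "key j u < q"
  unfolding key_def using q_pos digit_less by simp

lemma key_last: "key j m = ((\<Sum>l<m. digit q j l) + digit q j m + 1) mod q"
  by (simp add: key_def lessThan_Suc_atMost[symmetric])

lemma digit_sum_entry:
  assumes "u < m"
  shows "[\<Sum>l<m. digit q (entry j u) l = (\<Sum>l<m. digit q j l) + digit q j m + 1] (mod q)"
proof -
  let ?x = "digit q j" and ?w = "(digit q j u + digit q j m + 1) mod q"
  have "(\<Sum>l<m. digit q (entry j u) l) + ?x u = (\<Sum>l<m. (?x(u := ?w)) l) + ?x u"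
    using digit_entry by simp
  also have "\<dots> = (\<Sum>l<m. ?x l) + ?w"
    using assms by (intro sum_fun_upd_add) auto
  finally have "[(\<Sum>l<m. digit q (entry j u) l) + ?x u
      = (\<Sum>l<m. ?x l) + digit q j m + 1 + ?x u] (mod q)"
    by (simp add: cong_def mod_add_right_eq ac_simps)
  then show ?thesis
    by (simp only: cong_add_rcancel_nat)
qed

lemma digit_sum_entry_last: "(\<Sum>l<m. digit q (entry j m) l) = (\<Sum>l<m. digit q j l)"
  using digit_entry by simp

definition shift :: "nat \<Rightarrow> nat \<Rightarrow> nat \<Rightarrow> nat" where
  "shift u t j = row ((digit q j)(u := (digit q j u + t) mod q)) (digit q j m)"

lemma
  assumes "j < (q - 1) * q ^ m"
  shows shift_less: "shift u t j < (q - 1) * q ^ m"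
    and digit_shift: "l < m \<Longrightarrow> digit q (shift u t j) l = ((digit q j)(u := (digit q j u + t) mod q)) l"
    and digit_shift_top: "digit q (shift u t j) m = digit q j m"
  using row_less digit_row digit_row_top top_less[OF assms] q_pos digit_less
  unfolding shift_def by auto

lemma inj_on_shift:
  assumes "u < m"
  shows "inj_on (shift u t) {..<(q - 1) * q ^ m}"
proof
  fix j1 j2
  assume "j1 \<in> {..<(q - 1) * q ^ m}" and "j2 \<in> {..<(q - 1) * q ^ m}"
    and eq: "shift u t j1 = shift u t j2"
  then have j1: "j1 < (q - 1) * q ^ m" and j2: "j2 < (q - 1) * q ^ m"
    by simp_all
  have digits_eq: "((digit q j1)(u := (digit q j1 u + t) mod q)) l
      = ((digit q j2)(u := (digit q j2 u + t) mod q)) l" if "l < m" for l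
    by (metis digit_shift[OF j1 that] digit_shift[OF j2 that] eq)
  have "[digit q j1 u + t = digit q j2 u + t] (mod q)"
    using digits_eq[OF assms] by (simp add: cong_def)
  then have du: "digit q j1 u = digit q j2 u"
    using digit_less[OF q_pos] by (intro cong_add_right_cancel_less)
  have dm: "digit q j1 m = digit q j2 m"
    by (metis digit_shift_top[OF j1] digit_shift_top[OF j2] eq)
  show "j1 = j2"
  proof (rule row_eqI[OF j1 j2])
    fix l
    assume "l \<le> m"
    then show "digit q j1 l = digit q j2 l"
      using du dm digits_eq[of l] by (cases "l = m"; cases "l = u") auto
  qed
qed

text \<open>Any lower digit can be shifted to move the key of the last block; digit \<open>0\<close> exists
  because \<open>m \<ge> 1\<close>.\<close>
lemma key_shift:
  assumes "u \<le> m" and j: "j < (q - 1) * q ^ m"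
  shows "key (shift (if u < m then u else 0) t j) u = (key j u + t) mod q"
proof (cases "u < m")
  case True
  then show ?thesis
    using digit_shift[OF j True] by (simp add: key_def)
next
  case False
  let ?x = "digit q j" and ?j' = "shift 0 t j"
  have "(\<Sum>l<m. digit q ?j' l) + ?x 0 = (\<Sum>l<m. (?x(0 := (?x 0 + t) mod q)) l) + ?x 0"
    using digit_shift[OF j] by simp
  also have "\<dots> = (\<Sum>l<m. ?x l) + (?x 0 + t) mod q"
    using m_ge_1 by (intro sum_fun_upd_add) auto
  finally have "[(\<Sum>l<m. digit q ?j' l) + ?x 0 = (\<Sum>l<m. ?x l) + t + ?x 0] (mod q)"
    by (simp add: cong_def mod_add_right_eq ac_simps)
  then have "[(\<Sum>l<m. digit q ?j' l) = (\<Sum>l<m. ?x l) + t] (mod q)"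
    by (simp only: cong_add_rcancel_nat)
  then have "[(\<Sum>l<m. digit q ?j' l) + (?x m + 1) = (\<Sum>l<m. ?x l) + t + (?x m + 1)] (mod q)"
    by (simp only: cong_add_rcancel_nat)
  then show ?thesis
    using False assms(1) digit_shift_top[OF j]
    by (simp add: key_last cong_def mod_add_left_eq mod_add_right_eq ac_simps)
qed

lemma card_key_eq:
  assumes "u \<le> m" and "v < q"
  shows "q * card {j. j < (q - 1) * q ^ m \<and> key j u = v} = (q - 1) * q ^ m"
proof -
  let ?p = "if u < m then u else 0"
  have "q * card {j \<in> {..<(q - 1) * q ^ m}. key j u = v} = card {..<(q - 1) * q ^ m}"
  proof (rule card_fibres_eq_if_cyclic_shifts[where \<sigma> = "\<lambda>t. shift ?p t"])
    show "inj_on (shift ?p t) {..<(q - 1) * q ^ m}" for t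
      using m_ge_1 by (intro inj_on_shift) simp
  qed (use assms key_less shift_less key_shift in auto)
  then show ?thesis
    by simp
qed

lemma entry_key_inj:
  assumes j1: "j1 < (q - 1) * q ^ m" and j2: "j2 < (q - 1) * q ^ m" and "u \<le> m"
    and key: "key j1 u = key j2 u" and entry: "entry j1 u = entry j2 u"
  shows "j1 = j2"
proof -
  have low: "digit q j1 l = digit q j2 l" if "l < m" "l \<noteq> u" for l
    using digit_entry[OF that(1), of j1 u] digit_entry[OF that(1), of j2 u] that(2)
    by (simp add: entry)
  have tops: "digit q j1 m < q" "digit q j2 m < q"
    using top_less[OF j1] top_less[OF j2] by simp_all
  have top: "digit q j1 m = digit q j2 m"
  proof (cases "u < m")
    case True
    then have "[digit q j1 m + (key j1 u + 1) = digit q j2 m + (key j1 u + 1)] (mod q)"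
      using digit_entry[OF True, of j1 u] digit_entry[OF True, of j2 u] key
      by (simp add: entry key_def cong_def ac_simps)
    then show ?thesis
      using tops by (intro cong_add_right_cancel_less)
  next
    case False
    then have "(\<Sum>l<m. digit q j1 l) = (\<Sum>l<m. digit q j2 l)"
      using low by (intro sum.cong) auto
    then have "[digit q j1 m + ((\<Sum>l<m. digit q j1 l) + 1)
        = digit q j2 m + ((\<Sum>l<m. digit q j1 l) + 1)] (mod q)"
      using key False \<open>u \<le> m\<close> by (simp add: key_last cong_def ac_simps)
    then show ?thesis
      using tops by (intro cong_add_right_cancel_less)
  qed
  show ?thesis
  proof (rule row_eqI[OF j1 j2])
    fix l
    assume "l \<le> m"
    then show "digit q j1 l = digit q j2 l"
      using low top key by (cases "l = m"; cases "l = u") (auto simp: key_def)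
  qed
qed

text \<open>If \<open>u\<^sub>1 \<noteq> u\<^sub>2\<close>, digit \<open>u\<^sub>2\<close> of the common value (its digit sum if \<open>u\<^sub>2 = m\<close>) would be
  congruent to itself plus \<open>digit q j\<^sub>2 m + 1\<close>, which lies in \<open>[1, q)\<close>.\<close>
lemma filled_same_entry:
  assumes j1: "j1 < (q - 1) * q ^ m" and j2: "j2 < (q - 1) * q ^ m"
    and u1: "u1 \<le> m" and u2: "u2 \<le> m"
    and entry: "entry j1 u1 = entry j2 u2" and key: "key j1 u2 = key j2 u2"
  shows "j1 = j2 \<and> u1 = u2"
proof -
  let ?s = "entry j2 u2" and ?a2 = "digit q j2 m"
  have a2: "?a2 + 1 < q"
    using top_less[OF j2] by simp
  have "u1 = u2"
  proof (rule ccontr)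
    assume ne: "u1 \<noteq> u2"
    show False
    proof (cases "u2 < m")
      case True
      have "digit q j2 u2 = digit q j1 u2"
        using key True by (simp add: key_def)
      also have "\<dots> = digit q ?s u2"
        using digit_entry[OF True, of j1 u1] ne by (simp add: entry)
      also have "\<dots> = (digit q j2 u2 + (?a2 + 1)) mod q"
        using digit_entry[OF True, of j2 u2] by (simp add: ac_simps)
      finally have "[digit q j2 u2 + (?a2 + 1) = digit q j2 u2] (mod q)"
        by (simp add: cong_def digit_less q_pos)
      then show False
        using not_cong_add_self[OF _ a2] by simp
    next
      case False
      then have u1_less: "u1 < m" and u2_eq: "u2 = m"
        using ne u1 u2 by auto
      have "[key j1 m = (\<Sum>l<m. digit q ?s l)] (mod q)"
        using digit_sum_entry[OF u1_less, of j1]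
        by (simp add: entry key_last cong_def)
      moreover have "key j2 m = ((\<Sum>l<m. digit q ?s l) + (?a2 + 1)) mod q"
        by (simp add: u2_eq digit_sum_entry_last key_last ac_simps)
      ultimately have "[(\<Sum>l<m. digit q ?s l) + (?a2 + 1) = (\<Sum>l<m. digit q ?s l)] (mod q)"
        using key by (simp add: u2_eq cong_def)
      then show False
        using not_cong_add_self[OF _ a2] by simp
    qed
  qed
  then show ?thesis
    using entry_key_inj[OF j1 j2 u2] key entry by simp
qed

lemma entry_top_inj:
  assumes j1: "j1 < (q - 1) * q ^ m" and j2: "j2 < (q - 1) * q ^ m" and u: "u \<le> m"
    and top: "digit q j1 m = digit q j2 m" and entry: "entry j1 u = entry j2 u"
  shows "j1 = j2"
proof (rule entry_key_inj[OF j1 j2 u _ entry])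
  show "key j1 u = key j2 u"
  proof (cases "u < m")
    case True
    then have "[key j1 u + (digit q j1 m + 1) = key j2 u + (digit q j1 m + 1)] (mod q)"
      using digit_entry[OF True, of j1 u] digit_entry[OF True, of j2 u]
      by (simp add: entry top key_def cong_def ac_simps)
    then show ?thesis
      using key_less by (intro cong_add_right_cancel_less)
  next
    case False
    then have "(\<Sum>l<m. digit q j1 l) = (\<Sum>l<m. digit q j2 l)"
      using digit_sum_entry_last[of j1] digit_sum_entry_last[of j2] entry u by simp
    then show ?thesis
      using False u by (simp add: key_last top)
  qed
qed

lemma entry_surj:
  assumes s: "s < q ^ m" and "u \<le> m" and a: "a < q - 1"
  obtains j where "j < (q - 1) * q ^ m" and "digit q j m = a" and "entry j u = s"
proof
  let ?x = "(digit q s)(u := (digit q s u + (q - 1 - a)) mod q)"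
  have x_less: "?x l < q" for l
    using q_pos digit_less by simp
  show "row ?x a < (q - 1) * q ^ m"
    using x_less a by (intro row_less)
  show top: "digit q (row ?x a) m = a"
    using x_less a by (intro digit_row_top) auto
  have "entry (row ?x a) u = from_digits q m (digit q s)"
    unfolding entry_def
  proof (rule from_digits_cong)
    fix l
    assume l: "l < m"
    have arg: "digit q s u + (q - 1 - a) + (a + 1) = digit q s u + q"
      using a by simp
    have "((digit q s u + (q - 1 - a)) mod q + (a + 1)) mod q
        = (digit q s u + (q - 1 - a) + (a + 1)) mod q"
      by (rule mod_add_left_eq)
    also have "\<dots> = digit q s u"
      unfolding arg using q_pos digit_less by simp
    finally have digit_u: "((digit q s u + (q - 1 - a)) mod q + (a + 1)) mod q = digit q s u" .
    then show "((digit q (row ?x a))(u := (digit q (row ?x a) u + digit q (row ?x a) m + 1) mod q)) l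
        = digit q s l"
      using digit_row[where x = ?x, OF x_less l] top digit_u by auto
  qed
  then show "entry (row ?x a) u = s"
    using s by (simp add: from_digits_digit q_pos)
qed

lemma column_index_bounds:
  assumes "k < q * (m + 1)"
  shows "k div q \<le> m" and "k mod q < q"
proof -
  have "k div q < m + 1"
    using assms by (simp add: less_mult_imp_div_less mult.commute)
  then show "k div q \<le> m"
    by simp
  show "k mod q < q"
    using q_pos by simp
qed

lemma B_arr_eq_Some_iff:
  assumes "k < q * (m + 1)"
  shows "B_arr q m j k = Some s \<longleftrightarrow> key j (k div q) = k mod q \<and> entry j (k div q) = s"
  using B_arr_column[OF column_index_bounds[OF assms], of j, unfolded div_mult_mod_eq] by auto

lemma B_arr_eq_None_iff:
  assumes "k < q * (m + 1)"
  shows "B_arr q m j k = None \<longleftrightarrow> key j (k div q) \<noteq> k mod q"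
  using B_arr_column[OF column_index_bounds[OF assms], of j, unfolded div_mult_mod_eq] by auto

lemma B_arr_value_less:
  assumes "k < q * (m + 1)" and "B_arr q m j k = Some s"
  shows "s < q ^ m"
  using assms entry_less by (auto simp: B_arr_eq_Some_iff)

lemma card_B_arr_None:
  assumes k: "k < q * (m + 1)"
  shows "card {j. j < (q - 1) * q ^ m \<and> B_arr q m j k = None} = (q - 1)^2 * q ^ (m - 1)"
proof -
  let ?filled = "{j. j < (q - 1) * q ^ m \<and> key j (k div q) = k mod q}"
  have qm: "q ^ m = q * q ^ (m - 1)"
    using m_ge_1 by (cases m) simp_all
  have "q * card ?filled = q * ((q - 1) * q ^ (m - 1))"
    using card_key_eq[OF column_index_bounds[OF k]] by (simp add: qm mult.left_commute)
  then have filled: "card ?filled = (q - 1) * q ^ (m - 1)"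
    using q_pos by simp
  have "{j. j < (q - 1) * q ^ m \<and> B_arr q m j k = None} = {..<(q - 1) * q ^ m} - ?filled"
    using B_arr_eq_None_iff[OF k] by auto
  then have "card {j. j < (q - 1) * q ^ m \<and> B_arr q m j k = None}
      = card {..<(q - 1) * q ^ m} - card ?filled"
    by (simp add: card_Diff_subset subset_eq)
  also have "\<dots> = q * ((q - 1) * q ^ (m - 1)) - (q - 1) * q ^ (m - 1)"
    using filled by (simp add: qm mult.left_commute)
  also have "\<dots> = (q - 1) * ((q - 1) * q ^ (m - 1))"
    by (metis diff_mult_distrib mult_1)
  also have "\<dots> = (q - 1)^2 * q ^ (m - 1)"
    by (simp add: power2_eq_square)
  finally show ?thesis .
qed

lemma B_arr_cross_None:
  assumes j1: "j1 < (q - 1) * q ^ m" and j2: "j2 < (q - 1) * q ^ m"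
    and k1: "k1 < q * (m + 1)" and k2: "k2 < q * (m + 1)" and ne: "(j1, k1) \<noteq> (j2, k2)"
    and s1: "B_arr q m j1 k1 = Some s" and s2: "B_arr q m j2 k2 = Some s"
  shows "B_arr q m j1 k2 = None"
proof (rule ccontr)
  assume "B_arr q m j1 k2 \<noteq> None"
  then have "key j1 (k2 div q) = key j2 (k2 div q)"
    using s2 B_arr_eq_None_iff[OF k2] B_arr_eq_Some_iff[OF k2] by auto
  then have "j1 = j2 \<and> k1 div q = k2 div q"
    using s1 s2 B_arr_eq_Some_iff[OF k1] B_arr_eq_Some_iff[OF k2]
    by (intro filled_same_entry[OF j1 j2 column_index_bounds(1)[OF k1] column_index_bounds(1)[OF k2]]) auto
  moreover from this have "k1 mod q = k2 mod q"
    using s1 s2 B_arr_eq_Some_iff[OF k1] B_arr_eq_Some_iff[OF k2] by auto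
  ultimately show False
    using ne by (metis div_mult_mod_eq)
qed

lemma B_arr_Some_cell_unique:
  assumes j1: "j1 < (q - 1) * q ^ m" and j2: "j2 < (q - 1) * q ^ m"
    and k1: "k1 < q * (m + 1)" and k2: "k2 < q * (m + 1)"
    and s1: "B_arr q m j1 k1 = Some s" and s2: "B_arr q m j2 k2 = Some s"
    and u: "k1 div q = k2 div q" and top: "digit q j1 m = digit q j2 m"
  shows "j1 = j2 \<and> k1 = k2"
proof -
  have "j1 = j2"
    using s1 s2 B_arr_eq_Some_iff[OF k1] B_arr_eq_Some_iff[OF k2] u
    by (intro entry_top_inj[OF j1 j2 column_index_bounds(1)[OF k1] top]) auto
  moreover have "k1 mod q = k2 mod q"
    using s1 s2 B_arr_eq_Some_iff[OF k1] B_arr_eq_Some_iff[OF k2] u calculation by auto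
  ultimately show ?thesis
    using u by (metis div_mult_mod_eq)
qed

lemma B_arr_Some_cell_exists:
  assumes s: "s < q ^ m" and u: "u \<le> m" and a: "a < q - 1"
  obtains j k where "j < (q - 1) * q ^ m" and "k < q * (m + 1)" and "B_arr q m j k = Some s"
    and "k div q = u" and "digit q j m = a"
proof -
  obtain j where j: "j < (q - 1) * q ^ m" and top: "digit q j m = a" and entry: "entry j u = s"
    using entry_surj[OF s u a] .
  have "u * q + key j u < (u + 1) * q"
    using key_less[of j u] by simp
  also have "\<dots> \<le> q * (m + 1)"
    using u by (simp add: mult.commute)
  finally have k: "u * q + key j u < q * (m + 1)" .
  have "B_arr q m j (u * q + key j u) = Some s"
    using B_arr_column[OF u key_less] entry by simp
  moreover have "(u * q + key j u) div q = u"
    using key_less[of j u] by simp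
  ultimately show ?thesis
    using that j k top by blast
qed

lemma card_B_arr_Some:
  assumes s: "s < q ^ m"
  shows "card {(j, k). j < (q - 1) * q ^ m \<and> k < q * (m + 1) \<and> B_arr q m j k = Some s}
    = (q - 1) * (m + 1)"
proof -
  let ?T = "{(j, k). j < (q - 1) * q ^ m \<and> k < q * (m + 1) \<and> B_arr q m j k = Some s}"
  let ?g = "\<lambda>(j, k). (k div q, digit q j m)"
  have "inj_on ?g ?T"
    using B_arr_Some_cell_unique by (intro inj_onI) auto
  moreover have "?g ` ?T = {..m} \<times> {..<q - 1}"
  proof
    show "?g ` ?T \<subseteq> {..m} \<times> {..<q - 1}"
      using column_index_bounds(1) top_less by auto
    show "{..m} \<times> {..<q - 1} \<subseteq> ?g ` ?T"
    proof clarify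
      fix u a
      assume "u \<le> m" and "a < q - 1"
      then obtain j k where "j < (q - 1) * q ^ m" "k < q * (m + 1)" "B_arr q m j k = Some s"
          "k div q = u" "digit q j m = a"
        using B_arr_Some_cell_exists[OF s] by metis
      then show "(u, a) \<in> ?g ` ?T"
        by (intro image_eqI[where x = "(j, k)"]) auto
    qed
  qed
  ultimately have "card ?T = card ({..m} \<times> {..<q - 1})"
    using card_image by fastforce
  then show ?thesis
    by (simp add: card_cartesian_product)
qed

end

theorem theorem5:
  fixes q m :: nat
  assumes "q \<ge> 2" and "m \<ge> 1"
  shows "is_regular_PDA ((q - 1) * (m + 1)) (q * (m + 1)) ((q - 1) * q ^ m)
           ((q - 1)^2 * q ^ (m - 1)) (q ^ m) (B_arr q m)
         \<and> PDA_rate (q ^ m) ((q - 1) * q ^ m) = 1 / real (q - 1)"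
proof -
  interpret B_array q m
    using assms by unfold_locales
  have C3: "j1 \<noteq> j2 \<and> k1 \<noteq> k2 \<and> B_arr q m j1 k2 = None \<and> B_arr q m j2 k1 = None"
    if "j1 < (q - 1) * q ^ m" "j2 < (q - 1) * q ^ m" "k1 < q * (m + 1)" "k2 < q * (m + 1)"
      "(j1, k1) \<noteq> (j2, k2)" "B_arr q m j1 k1 = Some s" "B_arr q m j2 k2 = Some s" for j1 j2 k1 k2 s
    using B_arr_cross_None[OF that] B_arr_cross_None[OF that(2,1,4,3) _ that(7,6)] that(5-7)
    by auto
  have "is_PDA (q * (m + 1)) ((q - 1) * q ^ m) ((q - 1)^2 * q ^ (m - 1)) (q ^ m) (B_arr q m)"
    unfolding is_PDA_def using B_arr_value_less card_B_arr_None C3 by blast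
  moreover have "PDA_rate (q ^ m) ((q - 1) * q ^ m) = 1 / real (q - 1)"
    using q_pos by (simp add: PDA_rate_def)
  ultimately show ?thesis
    unfolding is_regular_PDA_def using card_B_arr_Some by blast
qed

end
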